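(* Let $b\ge2$, $c_{\mathrm{ov}}\ge0$, $c_i>0$, $c_i^\sharp\ge0$ ($i\in[b]$), and $d_j:=c_{\mathrm{ov}}+\sum_{i\ge j}(c_i+c_i^\sharp)$, so that $d_1>d_2>\cdots>d_b$. Let $L^0_{i,\{s,\dots,b\}}>0$ ($1\le s\le i\le b$) satisfy $L^0_{i,\{1,\dots,b\}}\ge L^0_{i,\{2,\dots,b\}}\ge\cdots\ge L^0_{i,\{i,\dots,b\}}$ for each $i$, and set $\delta_{i,s}:=1/(2L^0_{i,\{s,\dots,b\}})$, so $\delta_{i,1}\le\delta_{i,2}\le\cdots\le\delta_{i,i}$. Consider the linear program $$\min_{q\in\mathbb R^b}\ \sum_{j=1}^bd_jq_j\quad\text{s.t.}\quad q_1,\dots,q_b\ge0,\qquad\sum_{s=1}^i\delta_{i,s}q_s\ge1\ \ (i\in[b]).$$ Let $q$ be an optimal point and fix $i\in[b-1]$. If $\sum_{s=1}^i\delta_{i,s}q_s>1$, then $q_i=0$. Equivalently, $q_i>0$ implies $\sum_{s=1}^i\delta_{i,s}q_s=1$.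
   Context: The constants $L^0_{i,\{s,\dots,b\}}$ are the layer-wise smoothness constants for the randomized progressive training supports $\{s,\dots,b\}$; the monotonicity in $s$ is the choice permitted by nestedness of these sets. This program is an equivalent reformulation of minimizing the expected cost of randomized progressive training over the probabilities $p_s$. *)

theory Defs
  imports Complex_Main
begin

text \<open>Indices range over 1..b. d j = c_ov + sum_{i=j..b} (c i + cs i).
  L i s stands for L^0_{i,{s,...,b}}, delta i s = 1/(2 L i s).\<close>

definition dcost :: "nat \<Rightarrow> real \<Rightarrow> (nat \<Rightarrow> real) \<Rightarrow> (nat \<Rightarrow> real) \<Rightarrow> nat \<Rightarrow> real" where
  "dcost b cov c cs j = cov + (\<Sum>i=j..b. c i + cs i)"

definition delta :: "(nat \<Rightarrow> nat \<Rightarrow> real) \<Rightarrow> nat \<Rightarrow> nat \<Rightarrow> real" where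
  "delta L i s = 1 / (2 * L i s)"

definition lp_feasible :: "nat \<Rightarrow> (nat \<Rightarrow> nat \<Rightarrow> real) \<Rightarrow> (nat \<Rightarrow> real) \<Rightarrow> bool" where
  "lp_feasible b L q \<longleftrightarrow>
     (\<forall>j\<in>{1..b}. q j \<ge> 0) \<and>
     (\<forall>i\<in>{1..b}. (\<Sum>s=1..i. delta L i s * q s) \<ge> 1)"

definition lp_objective :: "nat \<Rightarrow> real \<Rightarrow> (nat \<Rightarrow> real) \<Rightarrow> (nat \<Rightarrow> real) \<Rightarrow> (nat \<Rightarrow> real) \<Rightarrow> real" where
  "lp_objective b cov c cs q = (\<Sum>j=1..b. dcost b cov c cs j * q j)"

definition lp_optimal :: "nat \<Rightarrow> real \<Rightarrow> (nat \<Rightarrow> real) \<Rightarrow> (nat \<Rightarrow> real) \<Rightarrow> (nat \<Rightarrow> nat \<Rightarrow> real) \<Rightarrow> (nat \<Rightarrow> real) \<Rightarrow> bool" where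
  "lp_optimal b cov c cs L q \<longleftrightarrow> lp_feasible b L q \<and>
     (\<forall>q'. lp_feasible b L q' \<longrightarrow> lp_objective b cov c cs q \<le> lp_objective b cov c cs q')"

end

theory Submission
  imports Defs
begin

text \<open>If row i of the constraints is slack while q i > 0, move a little mass e from q i to
  q (i+1). Rows k < i do not see the change, row i loses delta i i * e, which the slack
  absorbs, and every row k > i gains (delta k (i+1) - delta k i) * e \<ge> 0 because L k is
  antitone in its second argument. The cost changes by (d (i+1) - d i) * e = -(c i + cs i) * e < 0,
  contradicting optimality.\<close>

definition shift_mass :: "(nat \<Rightarrow> real) \<Rightarrow> nat \<Rightarrow> real \<Rightarrow> nat \<Rightarrow> real" where
  "shift_mass q i e = q(i := q i - e, Suc i := q (Suc i) + e)"

lemma sum_shift_mass: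
  fixes f q :: "nat \<Rightarrow> real"
  assumes "finite A"
  shows "(\<Sum>s\<in>A. f s * shift_mass q i e s) =
    (\<Sum>s\<in>A. f s * q s) + (if Suc i \<in> A then f (Suc i) * e else 0) - (if i \<in> A then f i * e else 0)"
proof -
  have "\<And>s. f s * shift_mass q i e s =
      f s * q s + (if s = Suc i then f s * e else 0) - (if s = i then f s * e else 0)"
    by (auto simp: shift_mass_def algebra_simps)
  then show ?thesis
    using assms by (simp add: sum.distrib sum_subtractf sum.delta')
qed

lemma dcost_unfold:
  assumes "i \<le> b"
  shows "dcost b cov c cs i = c i + cs i + dcost b cov c cs (Suc i)"
  using assms by (simp add: dcost_def sum.atLeast_Suc_atMost)

lemma lp_objective_shift_mass:
  assumes "1 \<le> i" "Suc i \<le> b"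
  shows "lp_objective b cov c cs (shift_mass q i e) = lp_objective b cov c cs q - (c i + cs i) * e"
proof -
  have "dcost b cov c cs i = c i + cs i + dcost b cov c cs (Suc i)"
    using assms by (simp add: dcost_unfold)
  then show ?thesis
    using assms unfolding lp_objective_def sum_shift_mass[OF finite_atLeastAtMost]
    by (simp add: algebra_simps)
qed

lemma delta_antimono:
  assumes "0 < L k t" "L k t \<le> L k s"
  shows "delta L k s \<le> delta L k t"
  using assms by (simp add: delta_def frac_le)

lemma lp_feasible_shift_mass:
  assumes feas: "lp_feasible b L q"
    and Lpos: "\<forall>k\<in>{1..b}. \<forall>s\<in>{1..k}. L k s > 0"
    and Lmono: "\<forall>k\<in>{1..b}. \<forall>s\<in>{1..k}. \<forall>t\<in>{1..k}. s \<le> t \<longrightarrow> L k t \<le> L k s"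
    and i: "1 \<le> i" "Suc i \<le> b"
    and e: "0 \<le> e" "e \<le> q i"
    and slack: "delta L i i * e \<le> (\<Sum>s=1..i. delta L i s * q s) - 1"
  shows "lp_feasible b L (shift_mass q i e)"
  unfolding lp_feasible_def
proof (intro conjI ballI)
  fix j assume "j \<in> {1..b}"
  then have "q j \<ge> 0" "q (Suc i) \<ge> 0"
    using feas i unfolding lp_feasible_def by auto
  then show "shift_mass q i e j \<ge> 0"
    using e by (auto simp: shift_mass_def)
next
  fix k assume k: "k \<in> {1..b}"
  have row: "(\<Sum>s=1..k. delta L k s * q s) \<ge> 1"
    using feas k unfolding lp_feasible_def by auto
  consider "k < i" | "k = i" | "Suc i \<le> k" by linarith
  then show "(\<Sum>s=1..k. delta L k s * shift_mass q i e s) \<ge> 1"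
  proof cases
    case 1
    then show ?thesis using row by (simp add: sum_shift_mass)
  next
    case 2
    then show ?thesis using slack i by (simp add: sum_shift_mass)
  next
    case 3
    have "delta L k i \<le> delta L k (Suc i)"
      using Lpos Lmono k 3 i by (intro delta_antimono) auto
    then have "delta L k i * e \<le> delta L k (Suc i) * e"
      using e by (simp add: mult_right_mono)
    then show ?thesis using row 3 i by (simp add: sum_shift_mass)
  qed
qed

theorem lemma2:
  fixes b :: nat and cov :: real and c cs :: "nat \<Rightarrow> real"
    and L :: "nat \<Rightarrow> nat \<Rightarrow> real" and q :: "nat \<Rightarrow> real" and i :: nat
  assumes hb: "b \<ge> 2"
    and hcov: "cov \<ge> 0"
    and hc: "\<forall>k\<in>{1..b}. c k > 0"
    and hcs: "\<forall>k\<in>{1..b}. cs k \<ge> 0"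
    and hLpos: "\<forall>k\<in>{1..b}. \<forall>s\<in>{1..k}. L k s > 0"
    and hLmono: "\<forall>k\<in>{1..b}. \<forall>s\<in>{1..k}. \<forall>t\<in>{1..k}. s \<le> t \<longrightarrow> L k t \<le> L k s"
    and hopt: "lp_optimal b cov c cs L q"
    and hi: "i \<in> {1..b-1}"
    and hslack: "(\<Sum>s=1..i. delta L i s * q s) > 1"
  shows "q i = 0"
proof (rule ccontr)
  assume "q i \<noteq> 0"
  have feas: "lp_feasible b L q" using hopt unfolding lp_optimal_def by simp
  have i: "1 \<le> i" "Suc i \<le> b" using hi hb by auto
  then have "q i > 0" using feas \<open>q i \<noteq> 0\<close> unfolding lp_feasible_def by force
  have dii: "delta L i i > 0" using hLpos i unfolding delta_def by simp
  define e where "e = min (q i) (((\<Sum>s=1..i. delta L i s * q s) - 1) / delta L i i)"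
  have e_pos: "0 < e" and e_le: "e \<le> q i"
    using \<open>q i > 0\<close> hslack dii by (auto simp: e_def)
  have e_slack: "delta L i i * e \<le> (\<Sum>s=1..i. delta L i s * q s) - 1"
    using dii unfolding e_def by (metis min.cobounded2 mult.commute pos_le_divide_eq)
  have "lp_feasible b L (shift_mass q i e)"
    using lp_feasible_shift_mass[OF feas hLpos hLmono i _ e_le e_slack] e_pos by simp
  then have "lp_objective b cov c cs q \<le> lp_objective b cov c cs (shift_mass q i e)"
    using hopt unfolding lp_optimal_def by blast
  moreover have "(c i + cs i) * e > 0"
    using hc hcs i e_pos by (simp add: add_pos_nonneg)
  ultimately show False
    using i by (simp add: lp_objective_shift_mass)
qed

end
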